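(* For the BDSSEP with parameters $0<\alpha\le\beta<1$ on $\Omega_N=\{0,1\}^{\{1,\dots,N-1\}}$, the mixing time satisfies $T^{\rm mix}_N\le \frac12 N^3$ for every $N\ge2$.
   Context: The BDSSEP is the continuous-time Markov chain on $\Omega_N$ with generator $$(L_Nf)(\eta)=\tfrac12\sum_{x=1}^{N-2}[f(\sigma^{x,x+1}\eta)-f(\eta)]+\tfrac12\{\alpha[1-\eta(1)]+(1-\alpha)\eta(1)\}[f(\sigma^1\eta)-f(\eta)]+\tfrac12\{\beta[1-\eta(N-1)]+(1-\beta)\eta(N-1)\}[f(\sigma^{N-1}\eta)-f(\eta)],$$ where $\sigma^{x,x+1}\eta$ exchanges $\eta(x),\eta(x+1)$ and $\sigma^x\eta$ flips $\eta(x)$; $\nu^N_{\alpha,\beta}$ is its stationary distribution. With $P_t(\eta,\xi)=\mathbb P_\eta[\eta(t)=\xi]$, $T^{\rm mix}_N=\inf\{t>0:\max_{\eta}\|P_t(\eta,\cdot)-\nu^N_{\alpha,\beta}\|_{\rm TV}\le1/4\}$. *)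

theory Defs
  imports Complex_Main
begin

text \<open>Configurations \<eta> \<in> {0,1}^{1..N-1} are encoded as the set of occupied sites,
  i.e. \<eta>(x) = 1 iff x \<in> \<eta>.\<close>

definition Omega :: "nat \<Rightarrow> nat set set" where
  "Omega N = Pow {1..N-1}"

definition occ :: "nat set \<Rightarrow> nat \<Rightarrow> real" where
  "occ \<eta> x = (if x \<in> \<eta> then 1 else 0)"

definition swap :: "nat \<Rightarrow> nat set \<Rightarrow> nat set" where
  "swap x \<eta> = {y. (y = x \<and> Suc x \<in> \<eta>) \<or> (y = Suc x \<and> x \<in> \<eta>) \<or> (y \<noteq> x \<and> y \<noteq> Suc x \<and> y \<in> \<eta>)}"

definition flip :: "nat \<Rightarrow> nat set \<Rightarrow> nat set" where
  "flip x \<eta> = (if x \<in> \<eta> then \<eta> - {x} else insert x \<eta>)"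

definition gen :: "nat \<Rightarrow> real \<Rightarrow> real \<Rightarrow> (nat set \<Rightarrow> real) \<Rightarrow> nat set \<Rightarrow> real" where
  "gen N \<alpha> \<beta> f \<eta> =
     1/2 * (\<Sum>x\<in>{1..N-2}. f (swap x \<eta>) - f \<eta>)
   + 1/2 * (\<alpha> * (1 - occ \<eta> 1) + (1 - \<alpha>) * occ \<eta> 1) * (f (flip 1 \<eta>) - f \<eta>)
   + 1/2 * (\<beta> * (1 - occ \<eta> (N-1)) + (1 - \<beta>) * occ \<eta> (N-1)) * (f (flip (N-1) \<eta>) - f \<eta>)"

definition Qmat :: "nat \<Rightarrow> real \<Rightarrow> real \<Rightarrow> nat set \<Rightarrow> nat set \<Rightarrow> real" where
  "Qmat N \<alpha> \<beta> \<eta> \<xi> = gen N \<alpha> \<beta> (\<lambda>\<zeta>. if \<zeta> = \<xi> then 1 else 0) \<eta>"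

fun Qpow :: "nat \<Rightarrow> real \<Rightarrow> real \<Rightarrow> nat \<Rightarrow> nat set \<Rightarrow> nat set \<Rightarrow> real" where
  "Qpow N \<alpha> \<beta> 0 \<eta> \<xi> = (if \<eta> = \<xi> then 1 else 0)"
| "Qpow N \<alpha> \<beta> (Suc k) \<eta> \<xi> = (\<Sum>\<zeta>\<in>Omega N. Qmat N \<alpha> \<beta> \<eta> \<zeta> * Qpow N \<alpha> \<beta> k \<zeta> \<xi>)"

definition Pt :: "nat \<Rightarrow> real \<Rightarrow> real \<Rightarrow> real \<Rightarrow> nat set \<Rightarrow> nat set \<Rightarrow> real" where
  "Pt N \<alpha> \<beta> t \<eta> \<xi> = (\<Sum>k. t ^ k / fact k * Qpow N \<alpha> \<beta> k \<eta> \<xi>)"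

definition stationary :: "nat \<Rightarrow> real \<Rightarrow> real \<Rightarrow> (nat set \<Rightarrow> real) \<Rightarrow> bool" where
  "stationary N \<alpha> \<beta> \<nu> \<longleftrightarrow>
     (\<forall>\<eta>\<in>Omega N. 0 \<le> \<nu> \<eta>) \<and> (\<Sum>\<eta>\<in>Omega N. \<nu> \<eta>) = 1 \<and>
     (\<forall>\<xi>\<in>Omega N. (\<Sum>\<eta>\<in>Omega N. \<nu> \<eta> * Qmat N \<alpha> \<beta> \<eta> \<xi>) = 0)"

definition tv_dist :: "nat \<Rightarrow> real \<Rightarrow> real \<Rightarrow> (nat set \<Rightarrow> real) \<Rightarrow> real \<Rightarrow> nat set \<Rightarrow> real" where
  "tv_dist N \<alpha> \<beta> \<nu> t \<eta> = 1/2 * (\<Sum>\<xi>\<in>Omega N. \<bar>Pt N \<alpha> \<beta> t \<eta> \<xi> - \<nu> \<xi>\<bar>)"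

definition Tmix :: "nat \<Rightarrow> real \<Rightarrow> real \<Rightarrow> (nat set \<Rightarrow> real) \<Rightarrow> real" where
  "Tmix N \<alpha> \<beta> \<nu> = Inf {t. t > 0 \<and> (\<forall>\<eta>\<in>Omega N. tv_dist N \<alpha> \<beta> \<nu> t \<eta> \<le> 1/4)}"

end

theory Submission
  imports Defs
begin

text \<open>Uniformization writes \<open>P\<^sub>t\<close> as a Poisson(\<open>N t / 2\<close>) mixture of the powers of a
  discrete-time chain in which every step applies a random map: an exchange of two neighbouring
  sites, or the setting of site \<open>1\<close> or \<open>N - 1\<close> to a value drawn from its reservoir. Applying
  the same maps to two configurations preserves inclusion, so coupling any \<open>\<eta>\<close> with the full
  configuration bounds the total variation distance by the expected number of discrepancies.
  The expected discrepancy at site \<open>x\<close> solves a discrete heat equation with zero boundary values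
  at \<open>0\<close> and \<open>N\<close>, and is therefore dominated by \<open>(1 - 8/N\<^sup>3)\<^sup>k x (N - x)\<close>. Averaging over the
  Poisson mixture yields \<open>N\<^sup>3 exp (-4 t / N\<^sup>2)\<close>, which is at most \<open>1/2\<close> at \<open>t = N\<^sup>3 / 2\<close>.\<close>

section \<open>Averaging operators of random mappings\<close>

locale random_mapping =
  fixes S :: "'a set" and I :: "'i set" and w :: "'i \<Rightarrow> real" and f :: "'i \<Rightarrow> 'a \<Rightarrow> 'a"
  assumes finite_index: "finite I"
    and weight_nonneg: "i \<in> I \<Longrightarrow> 0 \<le> w i"
    and weight_sum: "(\<Sum>i\<in>I. w i) = 1"
    and maps_into: "i \<in> I \<Longrightarrow> x \<in> S \<Longrightarrow> f i x \<in> S"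
begin

definition avg :: "('a \<Rightarrow> real) \<Rightarrow> 'a \<Rightarrow> real" where
  "avg g x = (\<Sum>i\<in>I. w i * g (f i x))"

lemma avg_add: "avg (\<lambda>y. g y + h y) = (\<lambda>x. avg g x + avg h x)"
  by (auto simp: avg_def sum.distrib distrib_left)

lemma avg_scale: "avg (\<lambda>y. c * g y) = (\<lambda>x. c * avg g x)"
  by (auto simp: avg_def sum_distrib_left mult.left_commute)

lemma avg_const: "avg (\<lambda>y. c) = (\<lambda>x. c)"
  by (auto simp: avg_def weight_sum simp flip: sum_distrib_right)

lemma avg_sum: "avg (\<lambda>y. \<Sum>j\<in>J. g j y) = (\<lambda>x. \<Sum>j\<in>J. avg (g j) x)"
  by (rule ext) (simp add: avg_def sum_distrib_left sum.swap[of _ I])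

lemma avg_cong: "x \<in> S \<Longrightarrow> (\<And>y. y \<in> S \<Longrightarrow> g y = h y) \<Longrightarrow> avg g x = avg h x"
  by (auto simp: avg_def maps_into intro: sum.cong)

lemma avg_mono: "x \<in> S \<Longrightarrow> (\<And>y. y \<in> S \<Longrightarrow> g y \<le> h y) \<Longrightarrow> avg g x \<le> avg h x"
  unfolding avg_def by (intro sum_mono mult_left_mono) (auto simp: maps_into weight_nonneg)

lemma avg_abs_le: "\<bar>avg g x\<bar> \<le> avg (\<lambda>y. \<bar>g y\<bar>) x"
  unfolding avg_def
  by (rule order_trans[OF sum_abs]) (simp add: abs_mult weight_nonneg)

lemma iter_add: "(avg ^^ k) (\<lambda>y. g y + h y) x = (avg ^^ k) g x + (avg ^^ k) h x"
  by (induction k arbitrary: g h) (simp_all add: funpow_Suc_right avg_add del: funpow.simps)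

lemma iter_scale: "(avg ^^ k) (\<lambda>y. c * g y) x = c * (avg ^^ k) g x"
  by (induction k arbitrary: g) (simp_all add: funpow_Suc_right avg_scale del: funpow.simps)

lemma iter_const: "(avg ^^ k) (\<lambda>y. c) x = c"
  by (induction k) (simp_all add: funpow_Suc_right avg_const del: funpow.simps)

lemma iter_sum: "(avg ^^ k) (\<lambda>y. \<Sum>j\<in>J. g j y) x = (\<Sum>j\<in>J. (avg ^^ k) (g j) x)"
  by (induction k arbitrary: g) (simp_all add: funpow_Suc_right avg_sum del: funpow.simps)

lemma iter_diff: "(avg ^^ k) (\<lambda>y. g y - h y) x = (avg ^^ k) g x - (avg ^^ k) h x"
  using iter_add[of k g "\<lambda>y. - h y"] iter_scale[of k "-1" h] by simp

lemma iter_cong: "x \<in> S \<Longrightarrow> (\<And>y. y \<in> S \<Longrightarrow> g y = h y) \<Longrightarrow> (avg ^^ k) g x = (avg ^^ k) h x"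
  by (induction k arbitrary: x) (auto intro: avg_cong)

lemma iter_mono: "x \<in> S \<Longrightarrow> (\<And>y. y \<in> S \<Longrightarrow> g y \<le> h y) \<Longrightarrow> (avg ^^ k) g x \<le> (avg ^^ k) h x"
  by (induction k arbitrary: x) (auto intro: avg_mono)

lemma iter_abs_le: "x \<in> S \<Longrightarrow> \<bar>(avg ^^ k) g x\<bar> \<le> (avg ^^ k) (\<lambda>y. \<bar>g y\<bar>) x"
  by (induction k arbitrary: x) (auto intro: order_trans[OF avg_abs_le] avg_mono)

end

section \<open>Poisson mixtures\<close>

lemma binomial_sum_Suc:
  fixes x y :: real and g :: "nat \<Rightarrow> real"
  shows "x * (\<Sum>i\<le>k. of_nat (k choose i) * x^i * y^(k-i) * g (Suc i))
         + y * (\<Sum>i\<le>k. of_nat (k choose i) * x^i * y^(k-i) * g i)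
       = (\<Sum>i\<le>Suc k. of_nat (Suc k choose i) * x^i * y^(Suc k - i) * g i)"
proof -
  have "y * (\<Sum>i\<le>k. of_nat (k choose i) * x^i * y^(k-i) * g i)
      = (\<Sum>i\<le>k. of_nat (k choose i) * x^i * y^(Suc k - i) * g i)"
    unfolding sum_distrib_left by (intro sum.cong refl) (simp add: Suc_diff_le)
  also have "\<dots> = (\<Sum>i\<le>Suc k. of_nat (k choose i) * x^i * y^(Suc k - i) * g i)"
    by simp
  also have "\<dots> = y^(Suc k) * g 0
      + (\<Sum>i\<le>k. of_nat (k choose Suc i) * x^(Suc i) * y^(k-i) * g (Suc i))"
    by (subst sum.atMost_Suc_shift) simp
  finally have low: "y * (\<Sum>i\<le>k. of_nat (k choose i) * x^i * y^(k-i) * g i) = \<dots>" .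
  have high: "x * (\<Sum>i\<le>k. of_nat (k choose i) * x^i * y^(k-i) * g (Suc i))
      = (\<Sum>i\<le>k. of_nat (k choose i) * x^(Suc i) * y^(k-i) * g (Suc i))"
    by (simp add: sum_distrib_left algebra_simps)
  have "(\<Sum>i\<le>Suc k. of_nat (Suc k choose i) * x^i * y^(Suc k - i) * g i)
      = y^(Suc k) * g 0
        + (\<Sum>i\<le>k. of_nat (Suc k choose Suc i) * x^(Suc i) * y^(k - i) * g (Suc i))"
    by (subst sum.atMost_Suc_shift) simp
  also have "\<dots> = y^(Suc k) * g 0
        + (\<Sum>i\<le>k. of_nat (k choose Suc i) * x^(Suc i) * y^(k-i) * g (Suc i))
        + (\<Sum>i\<le>k. of_nat (k choose i) * x^(Suc i) * y^(k-i) * g (Suc i))"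
    by (simp add: sum.distrib[symmetric] algebra_simps)
  finally show ?thesis using low high by simp
qed

lemma exp_series_sums: "(\<lambda>i. x^i / fact i) sums exp (x::real)"
  using exp_converges[of x] by (simp add: divide_inverse_commute)

lemma poisson_weighted_abs_summable:
  fixes g :: "nat \<Rightarrow> real"
  assumes bounded: "\<And>i. \<bar>g i\<bar> \<le> B"
  shows "summable (\<lambda>i. \<bar>x^i / fact i * g i\<bar>)"
proof (rule summable_comparison_test'[where N = 0])
  show "summable (\<lambda>i. \<bar>x\<bar>^i / fact i * B)"
    using exp_series_sums[of "\<bar>x\<bar>"] by (intro summable_mult2) (simp add: sums_iff)
  fix i :: nat assume "i \<ge> 0"
  have "\<bar>x\<bar>^i * \<bar>g i\<bar> / fact i \<le> \<bar>x\<bar>^i * B / fact i"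
    by (intro divide_right_mono mult_left_mono bounded) auto
  then show "norm \<bar>x^i / fact i * g i\<bar> \<le> \<bar>x\<bar>^i / fact i * B"
    by (simp add: abs_mult power_abs)
qed

text \<open>Uniformization: with \<open>Q = c (P - I)\<close>, the series \<open>\<Sum>k t^k/k! Q^k\<close> rearranges into a
  Poisson(\<open>c t\<close>) mixture of the powers of \<open>P\<close>; \<open>g i\<close> stands for an entry of \<open>P^i\<close>.\<close>

lemma poisson_uniformization_sums:
  fixes g :: "nat \<Rightarrow> real" and c t B :: real
  assumes bounded: "\<And>i. \<bar>g i\<bar> \<le> B"
  shows "(\<lambda>k. t^k / fact k * (\<Sum>i\<le>k. of_nat (k choose i) * c^i * (-c)^(k-i) * g i))
           sums (exp (-(c*t)) * (\<Sum>i. (c*t)^i / fact i * g i))"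
proof -
  define A where "A i = (c*t)^i / fact i * g i" for i
  define E where "E j = (-(c*t))^j / fact j" for j
  have A_summable: "summable (\<lambda>i. norm (A i))"
    using poisson_weighted_abs_summable[OF bounded] by (simp add: A_def)
  have E_summable: "summable (\<lambda>j. norm (E j))"
    using summable_norm_exp[of "-(c*t)"] by (simp add: E_def divide_inverse_commute)
  have "(\<Sum>i\<le>k. A i * E (k - i))
      = t^k / fact k * (\<Sum>i\<le>k. of_nat (k choose i) * c^i * (-c)^(k-i) * g i)" for k
  proof -
    have "A i * E (k - i) = t^k / fact k * (of_nat (k choose i) * c^i * (-c)^(k-i) * g i)"
      if "i \<le> k" for i
    proof -
      have "(-(c*t))^(k-i) = (-c)^(k-i) * t^(k-i)"
        by (metis minus_mult_left power_mult_distrib)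
      then have "A i * E (k - i)
          = (t^i * t^(k-i)) / (fact i * fact (k-i)) * (c^i * (-c)^(k-i) * g i)"
        by (simp add: A_def E_def power_mult_distrib)
      also have "\<dots> = t^k / fact k * (of_nat (k choose i) * c^i * (-c)^(k-i) * g i)"
        using that by (simp add: binomial_fact flip: power_add)
      finally show ?thesis .
    qed
    then show ?thesis by (simp add: sum_distrib_left)
  qed
  moreover have "(\<Sum>j. E j) = exp (-(c*t))"
    using exp_series_sums[of "-(c*t)"] by (simp add: E_def sums_iff)
  ultimately show ?thesis
    using Cauchy_product_sums[OF A_summable E_summable] by (simp add: A_def mult.commute)
qed

lemma poisson_mixture_l1_le:
  fixes D :: "'a \<Rightarrow> nat \<Rightarrow> real" and x l B C :: real
  assumes "finite X" "0 \<le> x"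
    and bounded: "\<And>\<xi> i. \<bar>D \<xi> i\<bar> \<le> B"
    and contracting: "\<And>i. (\<Sum>\<xi>\<in>X. \<bar>D \<xi> i\<bar>) \<le> C * l ^ i"
  shows "(\<Sum>\<xi>\<in>X. \<bar>exp (-x) * (\<Sum>i. x^i / fact i * D \<xi> i)\<bar>) \<le> C * exp (-(x * (1 - l)))"
proof -
  have abs_summable: "summable (\<lambda>i. \<bar>x^i / fact i * D \<xi> i\<bar>)" for \<xi>
    using poisson_weighted_abs_summable[OF bounded] .
  have "(\<Sum>\<xi>\<in>X. \<bar>exp (-x) * (\<Sum>i. x^i / fact i * D \<xi> i)\<bar>)
      \<le> (\<Sum>\<xi>\<in>X. exp (-x) * (\<Sum>i. \<bar>x^i / fact i * D \<xi> i\<bar>))"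
  proof (intro sum_mono)
    fix \<xi>
    have "\<bar>\<Sum>i. x^i / fact i * D \<xi> i\<bar> \<le> (\<Sum>i. \<bar>x^i / fact i * D \<xi> i\<bar>)"
      by (rule summable_rabs[OF abs_summable])
    then show "\<bar>exp (-x) * (\<Sum>i. x^i / fact i * D \<xi> i)\<bar> \<le> exp (-x) * (\<Sum>i. \<bar>x^i / fact i * D \<xi> i\<bar>)"
      unfolding abs_mult abs_exp_cancel by (rule mult_left_mono) simp
  qed
  also have "\<dots> = exp (-x) * (\<Sum>i. \<Sum>\<xi>\<in>X. \<bar>x^i / fact i * D \<xi> i\<bar>)"
    by (subst suminf_sum) (simp_all only: abs_summable sum_distrib_left)
  also have "\<dots> \<le> exp (-x) * (\<Sum>i. C * ((x * l)^i / fact i))"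
  proof (intro mult_left_mono suminf_le)
    fix i
    have "(\<Sum>\<xi>\<in>X. \<bar>x^i / fact i * D \<xi> i\<bar>) = x^i / fact i * (\<Sum>\<xi>\<in>X. \<bar>D \<xi> i\<bar>)"
      using assms(2) by (simp add: abs_mult sum_distrib_left)
    also have "\<dots> \<le> x^i / fact i * (C * l^i)"
      using assms(2) contracting by (intro mult_left_mono) auto
    also have "\<dots> = C * ((x * l)^i / fact i)"
      by (simp add: power_mult_distrib)
    finally show "(\<Sum>\<xi>\<in>X. \<bar>x^i / fact i * D \<xi> i\<bar>) \<le> C * ((x * l)^i / fact i)" .
  next
    show "summable (\<lambda>i. C * ((x * l)^i / fact i))"
      using exp_series_sums[of "x * l"] by (intro summable_mult) (simp add: sums_iff)
  qed (use summable_sum[OF abs_summable] in simp_all)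
  also have "(\<Sum>i. C * ((x * l)^i / fact i)) = C * exp (x * l)"
    using sums_mult[OF exp_series_sums[of "x * l"], of C] by (simp add: sums_iff)
  also have "exp (-x) * (C * exp (x * l)) = C * exp (-(x * (1 - l)))"
    by (simp add: mult.left_commute algebra_simps flip: exp_add)
  finally show ?thesis .
qed

lemma cube_mul_exp_le:
  fixes x :: real
  assumes "0 \<le> x"
  shows "x^3 * exp (-(2 * x)) \<le> 1/2"
proof -
  have "(1 + 2 * x / real (6::nat)) ^ 6 \<le> exp (2 * x)"
    using assms by (intro exp_ge_one_plus_x_over_n_power_n) auto
  moreover have "(1 + 2 * x / real (6::nat)) ^ 6 = ((3 + x)^2)^3 / 729"
    by (simp add: field_simps power_mult[symmetric])
  moreover have "12 * x \<le> (3 + x)^2"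
  proof -
    have "0 \<le> (x - 3)^2" by simp
    then show ?thesis by (simp add: power2_eq_square algebra_simps)
  qed
  then have "(12 * x)^3 \<le> ((3 + x)^2)^3"
    using assms by (intro power_mono) auto
  ultimately have "(12 * x)^3 / 729 \<le> exp (2 * x)" by simp
  moreover have "2 * x^3 \<le> (12 * x)^3 / 729"
    using assms by (simp add: power_mult_distrib)
  ultimately have "2 * x^3 \<le> exp (2 * x)" by linarith
  then show ?thesis by (simp add: exp_minus field_simps)
qed

lemma parabola_le_square: "4 * (x * (n - x)) \<le> (n::real)^2"
proof -
  have "0 \<le> (n - 2 * x)^2" by simp
  then show ?thesis by (simp add: power2_eq_square algebra_simps)
qed

section \<open>The exclusion process as a random mapping\<close>

datatype move = Exchange nat | Set_first bool | Set_last bool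

definition set_site :: "nat \<Rightarrow> bool \<Rightarrow> nat set \<Rightarrow> nat set" where
  "set_site x v \<eta> = (if v then insert x \<eta> else \<eta> - {x})"

locale bdssep =
  fixes N :: nat and a b :: real
  assumes N_ge_2: "2 \<le> N"
    and a_prob: "0 \<le> a" "a \<le> 1"
    and b_prob: "0 \<le> b" "b \<le> 1"
begin

definition moves :: "move set" where
  "moves = Exchange ` {1..N-2} \<union> {Set_first True, Set_first False, Set_last True, Set_last False}"

fun apply_move :: "move \<Rightarrow> nat set \<Rightarrow> nat set" where
  "apply_move (Exchange x) = swap x"
| "apply_move (Set_first v) = set_site 1 v"
| "apply_move (Set_last v) = set_site (N-1) v"

fun move_weight :: "move \<Rightarrow> real" where
  "move_weight (Exchange x) = 1 / N"
| "move_weight (Set_first v) = (if v then a else 1 - a) / N"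
| "move_weight (Set_last v) = (if v then b else 1 - b) / N"

lemma sum_moves:
  "(\<Sum>m\<in>moves. g m) = (\<Sum>x\<in>{1..N-2}. g (Exchange x))
     + g (Set_first True) + g (Set_first False) + g (Set_last True) + g (Set_last False)"
proof -
  have "(\<Sum>m\<in>Exchange ` {1..N-2}. g m) = (\<Sum>x\<in>{1..N-2}. g (Exchange x))"
    by (rule sum.reindex_cong[where l = Exchange]) (auto simp: inj_on_def)
  then show ?thesis unfolding moves_def by (subst sum.union_disjoint) (auto simp: add.assoc)
qed

lemma apply_move_Omega: "m \<in> moves \<Longrightarrow> \<eta> \<in> Omega N \<Longrightarrow> apply_move m \<eta> \<in> Omega N"
  using N_ge_2 unfolding moves_def Omega_def
  by (auto simp: swap_def set_site_def subset_iff)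

lemma apply_move_mono: "\<eta> \<subseteq> \<zeta> \<Longrightarrow> apply_move m \<eta> \<subseteq> apply_move m \<zeta>"
  by (cases m) (auto simp: swap_def set_site_def)

sublocale step: random_mapping "Omega N" moves move_weight apply_move
proof
  show "finite moves" by (simp add: moves_def)
  show "0 \<le> move_weight m" for m
    using a_prob b_prob by (cases m) auto
  show "(\<Sum>m\<in>moves. move_weight m) = 1"
    using N_ge_2 by (simp add: sum_moves of_nat_diff field_simps)
qed (fact apply_move_Omega)

text \<open>Both copies perform the same move, which preserves \<open>\<eta> \<subseteq> \<zeta>\<close>.\<close>

sublocale coupling: random_mapping "{(\<eta>, \<zeta>). \<eta> \<subseteq> \<zeta> \<and> \<zeta> \<in> Omega N}" moves move_weight
  "\<lambda>m. map_prod (apply_move m) (apply_move m)"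
proof
  fix m p assume "m \<in> moves" "p \<in> {(\<eta>, \<zeta>). \<eta> \<subseteq> \<zeta> \<and> \<zeta> \<in> Omega N}"
  then show "map_prod (apply_move m) (apply_move m) p \<in> {(\<eta>, \<zeta>). \<eta> \<subseteq> \<zeta> \<and> \<zeta> \<in> Omega N}"
    using apply_move_mono apply_move_Omega by (cases p) auto
qed (use step.weight_nonneg step.weight_sum step.finite_index in auto)

lemma step_avg_eq:
  "step.avg g \<eta> = ((\<Sum>x\<in>{1..N-2}. g (swap x \<eta>))
     + (a * g (insert 1 \<eta>) + (1 - a) * g (\<eta> - {1}))
     + (b * g (insert (N-1) \<eta>) + (1 - b) * g (\<eta> - {N-1}))) / N"
  by (simp add: step.avg_def sum_moves set_site_def sum_divide_distrib add_divide_distrib)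

lemma gen_eq_step_avg: "gen N a b g \<eta> = N / 2 * (step.avg g \<eta> - g \<eta>)"
proof -
  have first: "(a * (1 - occ \<eta> 1) + (1 - a) * occ \<eta> 1) * (g (flip 1 \<eta>) - g \<eta>)
      = a * g (insert 1 \<eta>) + (1 - a) * g (\<eta> - {1}) - g \<eta>"
    by (cases "1 \<in> \<eta>") (auto simp: occ_def flip_def insert_absorb field_simps)
  have last: "(b * (1 - occ \<eta> (N-1)) + (1 - b) * occ \<eta> (N-1)) * (g (flip (N-1) \<eta>) - g \<eta>)
      = b * g (insert (N-1) \<eta>) + (1 - b) * g (\<eta> - {N-1}) - g \<eta>"
    by (cases "N-1 \<in> \<eta>") (auto simp: occ_def flip_def insert_absorb field_simps)
  have exchange: "(\<Sum>x\<in>{1..N-2}. g (swap x \<eta>) - g \<eta>)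
      = (\<Sum>x\<in>{1..N-2}. g (swap x \<eta>)) - (N - 2) * g \<eta>"
    using N_ge_2 by (simp add: sum_subtractf of_nat_diff)
  show ?thesis
    using N_ge_2 unfolding gen_def step_avg_eq mult.assoc[of "1/2"] first last exchange
    by (simp add: field_simps)
qed

section \<open>Uniformization of the exclusion process\<close>

lemma Qmat_sum:
  assumes "\<eta> \<in> Omega N"
  shows "(\<Sum>\<zeta>\<in>Omega N. Qmat N a b \<eta> \<zeta> * F \<zeta>) = N / 2 * (step.avg F \<eta> - F \<eta>)"
proof -
  have "(\<Sum>\<zeta>\<in>Omega N. Qmat N a b \<eta> \<zeta> * F \<zeta>)
      = N / 2 * ((\<Sum>\<zeta>\<in>Omega N. step.avg (\<lambda>\<theta>. if \<theta> = \<zeta> then 1 else 0) \<eta> * F \<zeta>)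
                 - (\<Sum>\<zeta>\<in>Omega N. (if \<eta> = \<zeta> then 1 else 0) * F \<zeta>))"
    by (simp add: Qmat_def gen_eq_step_avg sum_distrib_left sum_subtractf algebra_simps)
  also have "(\<Sum>\<zeta>\<in>Omega N. step.avg (\<lambda>\<theta>. if \<theta> = \<zeta> then 1 else 0) \<eta> * F \<zeta>)
      = step.avg (\<lambda>\<theta>. \<Sum>\<zeta>\<in>Omega N. F \<zeta> * (if \<theta> = \<zeta> then 1 else 0)) \<eta>"
    by (simp add: step.avg_sum step.avg_scale mult.commute)
  also have "\<dots> = step.avg F \<eta>"
    using assms by (intro step.avg_cong) (simp_all add: Omega_def if_distrib cong: if_cong)
  also have "(\<Sum>\<zeta>\<in>Omega N. (if \<eta> = \<zeta> then 1 else 0) * F \<zeta>) = F \<eta>"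
    using assms by (simp add: Omega_def if_distrib[of "\<lambda>x. x * F _"] cong: if_cong)
  finally show ?thesis .
qed

definition discrete_prob :: "nat \<Rightarrow> nat set \<Rightarrow> nat set \<Rightarrow> real" where
  "discrete_prob k \<eta> \<xi> = (step.avg ^^ k) (\<lambda>\<zeta>. if \<zeta> = \<xi> then 1 else 0) \<eta>"

lemma discrete_prob_Suc: "discrete_prob (Suc k) \<eta> \<xi> = step.avg (\<lambda>\<zeta>. discrete_prob k \<zeta> \<xi>) \<eta>"
  by (simp add: discrete_prob_def)

lemma discrete_prob_bounds:
  assumes "\<eta> \<in> Omega N"
  shows "0 \<le> discrete_prob k \<eta> \<xi>" and "discrete_prob k \<eta> \<xi> \<le> 1"
  using step.iter_mono[OF assms, of "\<lambda>_. 0" _ k] step.iter_mono[OF assms, of _ "\<lambda>_. 1" k]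
  by (simp_all add: discrete_prob_def step.iter_const)

lemma discrete_prob_abs_le_1: "\<eta> \<in> Omega N \<Longrightarrow> \<bar>discrete_prob k \<eta> \<xi>\<bar> \<le> 1"
  using discrete_prob_bounds[of \<eta> k \<xi>] by simp

lemma Qpow_eq_binomial_sum:
  assumes "\<eta> \<in> Omega N"
  shows "Qpow N a b k \<eta> \<xi>
    = (\<Sum>i\<le>k. of_nat (k choose i) * (N/2)^i * (-(N/2))^(k-i) * discrete_prob i \<eta> \<xi>)"
  using assms
proof (induction k arbitrary: \<eta>)
  case 0
  then show ?case by (simp add: discrete_prob_def)
next
  case (Suc k)
  have "step.avg (\<lambda>\<zeta>. Qpow N a b k \<zeta> \<xi>) \<eta>
      = step.avg (\<lambda>\<zeta>. \<Sum>i\<le>k. of_nat (k choose i) * (N/2)^i * (-(N/2))^(k-i) * discrete_prob i \<zeta> \<xi>) \<eta>"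
    using Suc by (intro step.avg_cong) auto
  also have "\<dots> = (\<Sum>i\<le>k. of_nat (k choose i) * (N/2)^i * (-(N/2))^(k-i) * discrete_prob (Suc i) \<eta> \<xi>)"
    by (simp add: step.avg_sum step.avg_scale discrete_prob_Suc)
  finally show ?case
    using binomial_sum_Suc[of "N/2" k "-(N/2)" "\<lambda>i. discrete_prob i \<eta> \<xi>"]
    by (simp add: Qmat_sum[OF Suc.prems] Suc.IH[OF Suc.prems] algebra_simps)
qed

lemma Pt_sums:
  assumes "\<eta> \<in> Omega N"
  shows "(\<lambda>k. t^k / fact k * Qpow N a b k \<eta> \<xi>)
           sums (exp (-(N/2*t)) * (\<Sum>i. (N/2*t)^i / fact i * discrete_prob i \<eta> \<xi>))"
  using poisson_uniformization_sums[where g = "\<lambda>i. discrete_prob i \<eta> \<xi>" and B = 1 and c = "N/2"]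
    discrete_prob_abs_le_1[OF assms]
  by (simp add: Qpow_eq_binomial_sum[OF assms])

lemma Pt_eq_poisson_mixture:
  assumes "\<eta> \<in> Omega N"
  shows "Pt N a b t \<eta> \<xi> = exp (-(N/2*t)) * (\<Sum>i. (N/2*t)^i / fact i * discrete_prob i \<eta> \<xi>)"
  unfolding Pt_def using Pt_sums[OF assms] by (rule sums_unique[symmetric])

section \<open>Decay of the expected occupation gap\<close>

lemma occ_outside: "\<eta> \<in> Omega N \<Longrightarrow> x \<notin> {1..N-1} \<Longrightarrow> occ \<eta> x = 0"
  by (auto simp: occ_def Omega_def)

lemma sum_swap_occ:
  assumes "1 \<le> x"
  shows "(\<Sum>y\<in>{1..N-2}. occ (swap y \<eta>) x) = (N - 2) * occ \<eta> x
     + (if x \<le> N-2 then occ \<eta> (x+1) - occ \<eta> x else 0)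
     + (if 2 \<le> x \<and> x - 1 \<le> N-2 then occ \<eta> (x-1) - occ \<eta> x else 0)"
proof -
  have "occ (swap y \<eta>) x = occ \<eta> x + (if y = x then occ \<eta> (x+1) - occ \<eta> x else 0)
      + (if y = x - 1 then occ \<eta> (x-1) - occ \<eta> x else 0)" for y
    using assms by (auto simp: occ_def swap_def)
  then have "(\<Sum>y\<in>{1..N-2}. occ (swap y \<eta>) x) = (\<Sum>y\<in>{1..N-2}. occ \<eta> x)
      + (\<Sum>y\<in>{1..N-2}. if y = x then occ \<eta> (x+1) - occ \<eta> x else 0)
      + (\<Sum>y\<in>{1..N-2}. if y = x - 1 then occ \<eta> (x-1) - occ \<eta> x else 0)"
    by (simp add: sum.distrib)
  moreover have "(x - 1 \<in> {1..N-2}) = (2 \<le> x \<and> x - 1 \<le> N-2)"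
    using assms by auto
  ultimately show ?thesis
    using assms by (simp only: sum.delta finite_atLeastAtMost) simp
qed

definition boundary_input :: "nat \<Rightarrow> real" where
  "boundary_input x = (if x = 1 then a else 0) + (if x = N-1 then b else 0)"

lemma step_avg_occ:
  assumes "\<eta> \<in> Omega N" "1 \<le> x" "x \<le> N-1"
  shows "step.avg (\<lambda>\<theta>. occ \<theta> x) \<eta>
    = (N - 2) / N * occ \<eta> x + (1 / N * occ \<eta> (x+1) + 1 / N * occ \<eta> (x-1)) + boundary_input x / N"
proof -
  have first: "a * occ (insert 1 \<eta>) x + (1 - a) * occ (\<eta> - {1}) x = (if x = 1 then a else occ \<eta> x)"
    by (simp add: occ_def algebra_simps)
  have last: "b * occ (insert (N-1) \<eta>) x + (1 - b) * occ (\<eta> - {N-1}) x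
      = (if x = N-1 then b else occ \<eta> x)"
    by (simp add: occ_def algebra_simps)
  have "x = N-1 \<Longrightarrow> occ \<eta> (x+1) = 0" and "x = 1 \<Longrightarrow> occ \<eta> (x-1) = 0"
    using occ_outside[OF assms(1)] N_ge_2 by auto
  then show ?thesis
    unfolding step_avg_eq sum_swap_occ[OF assms(2)] first last boundary_input_def
    using assms(2,3) by (cases "x = 1"; cases "x = N-1") (auto simp: field_simps)
qed

text \<open>Under the coupling started from \<open>(\<eta>, {1..N-1})\<close>, \<open>occ_gap k x \<eta>\<close> is the probability
  of a discrepancy at site \<open>x\<close> after \<open>k\<close> steps.\<close>

definition occ_gap :: "nat \<Rightarrow> nat \<Rightarrow> nat set \<Rightarrow> real" where
  "occ_gap k x \<eta> = (step.avg ^^ k) (\<lambda>\<theta>. occ \<theta> x) {1..N-1} - (step.avg ^^ k) (\<lambda>\<theta>. occ \<theta> x) \<eta>"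

lemma full_Omega: "{1..N-1} \<in> Omega N"
  by (simp add: Omega_def)

lemma occ_gap_boundary:
  assumes "\<eta> \<in> Omega N" "x \<notin> {1..N-1}"
  shows "occ_gap k x \<eta> = 0"
proof -
  have "(step.avg ^^ k) (\<lambda>\<theta>. occ \<theta> x) \<zeta> = 0" if "\<zeta> \<in> Omega N" for \<zeta>
    using step.iter_cong[OF that, of "\<lambda>\<theta>. occ \<theta> x" "\<lambda>_. 0"] occ_outside[OF _ assms(2)]
    by (simp add: step.iter_const)
  then show ?thesis
    using assms(1) full_Omega by (simp add: occ_gap_def)
qed

lemma iter_occ_Suc:
  assumes "\<eta> \<in> Omega N" "1 \<le> x" "x \<le> N-1"
  shows "(step.avg ^^ Suc k) (\<lambda>\<theta>. occ \<theta> x) \<eta>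
    = (N - 2) / N * (step.avg ^^ k) (\<lambda>\<theta>. occ \<theta> x) \<eta>
      + (1 / N * (step.avg ^^ k) (\<lambda>\<theta>. occ \<theta> (x+1)) \<eta>
         + 1 / N * (step.avg ^^ k) (\<lambda>\<theta>. occ \<theta> (x-1)) \<eta>)
      + boundary_input x / N"
proof -
  have "(step.avg ^^ Suc k) (\<lambda>\<theta>. occ \<theta> x) \<eta> = (step.avg ^^ k) (step.avg (\<lambda>\<theta>. occ \<theta> x)) \<eta>"
    by (simp only: funpow_Suc_right o_apply)
  also have "\<dots> = (step.avg ^^ k) (\<lambda>\<zeta>. (N - 2) / N * occ \<zeta> x
      + (1 / N * occ \<zeta> (x+1) + 1 / N * occ \<zeta> (x-1)) + boundary_input x / N) \<eta>"
    using assms by (intro step.iter_cong) (simp_all add: step_avg_occ)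
  finally show ?thesis
    by (simp only: step.iter_add step.iter_scale step.iter_const)
qed

lemma occ_gap_Suc:
  assumes "\<eta> \<in> Omega N" "1 \<le> x" "x \<le> N-1"
  shows "occ_gap (Suc k) x \<eta>
    = ((N - 2) * occ_gap k x \<eta> + occ_gap k (x+1) \<eta> + occ_gap k (x-1) \<eta>) / N"
  unfolding occ_gap_def iter_occ_Suc[OF assms] iter_occ_Suc[OF full_Omega assms(2,3)]
  using N_ge_2 by (simp add: field_simps)

definition decay :: real where
  "decay = 1 - 8 / real N ^ 3"

lemma decay_nonneg: "0 \<le> decay"
proof -
  have "(2::real)^3 \<le> real N ^ 3"
    using N_ge_2 by (intro power_mono) auto
  then show ?thesis using N_ge_2 by (simp add: decay_def field_simps)
qed

text \<open>The discrete Laplacian of \<open>x (N - x)\<close> is \<open>-2\<close>, and \<open>x (N - x) \<le> N\<^sup>2 / 4\<close>.\<close>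

lemma parabola_supersolution:
  assumes "1 \<le> x" "x \<le> N-1"
  shows "(N - 2) * (real x * (real N - real x)) + real (x+1) * (real N - real (x+1))
      + real (x-1) * (real N - real (x-1)) \<le> N * (decay * (real x * (real N - real x)))"
proof -
  let ?h = "real x * (real N - real x)"
  have "real (x-1) = real x - 1" "real (N-2) = real N - 2"
    using assms N_ge_2 by (simp_all add: of_nat_diff)
  then have "(N - 2) * ?h + real (x+1) * (real N - real (x+1)) + real (x-1) * (real N - real (x-1))
      = N * ?h - 2"
    by (simp add: algebra_simps)
  moreover have "8 / real N ^ 3 * (N * ?h) \<le> 2"
  proof -
    have "8 / real N ^ 3 * (N * ?h) = 2 * (4 * ?h / real N ^ 2)"
      using N_ge_2 by (simp add: power2_eq_square power3_eq_cube)
    moreover have "4 * ?h / real N ^ 2 \<le> 1"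
      using parabola_le_square[of x N] N_ge_2 by simp
    ultimately show ?thesis by simp
  qed
  moreover have "N * (decay * ?h) = N * ?h - 8 / real N ^ 3 * (N * ?h)"
    unfolding decay_def by (simp add: left_diff_distrib right_diff_distrib mult.left_commute)
  ultimately show ?thesis by linarith
qed

lemma occ_gap_le_parabola:
  assumes "\<eta> \<in> Omega N" "x \<le> N"
  shows "occ_gap k x \<eta> \<le> decay ^ k * (real x * (real N - real x))"
  using assms(2)
proof (induction k arbitrary: x)
  case 0
  show ?case
  proof (cases "x \<in> {1..N-1}")
    case True
    then have "1 \<le> real x" "1 \<le> real N - real x" using 0 by auto
    then have "1 \<le> real x * (real N - real x)"
      by (metis mult_mono' mult_1 order_trans zero_le_one)
    moreover have "occ_gap 0 x \<eta> \<le> 1" by (simp add: occ_gap_def occ_def)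
    ultimately show ?thesis by simp
  qed (use 0 in \<open>simp add: occ_gap_boundary[OF assms(1)]\<close>)
next
  case (Suc k)
  let ?h = "\<lambda>y. real y * (real N - real y)"
  show ?case
  proof (cases "x \<in> {1..N-1}")
    case True
    then have x: "1 \<le> x" "x \<le> N-1" by auto
    have "(N - 2) * occ_gap k x \<eta> + occ_gap k (x+1) \<eta> + occ_gap k (x-1) \<eta>
        \<le> (N - 2) * (decay^k * ?h x) + decay^k * ?h (x+1) + decay^k * ?h (x-1)"
      using Suc.IH[of x] Suc.IH[of "x+1"] Suc.IH[of "x-1"] x N_ge_2
      by (intro add_mono mult_left_mono) auto
    also have "\<dots> = decay^k * ((N - 2) * ?h x + ?h (x+1) + ?h (x-1))"
      by (simp add: algebra_simps)
    also have "\<dots> \<le> decay^k * (N * (decay * ?h x))"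
      using parabola_supersolution[OF x] decay_nonneg by (intro mult_left_mono) auto
    finally show ?thesis
      unfolding occ_gap_Suc[OF assms(1) x] using N_ge_2 by (simp add: field_simps)
  qed (use Suc.prems decay_nonneg in \<open>simp add: occ_gap_boundary[OF assms(1)]\<close>)
qed

section \<open>Coupling bound on the total variation distance\<close>

lemma coupling_iter_fst: "(coupling.avg ^^ k) (\<lambda>p. g (fst p)) p = (step.avg ^^ k) g (fst p)"
  by (induction k arbitrary: p) (simp_all add: coupling.avg_def step.avg_def)

lemma coupling_iter_snd: "(coupling.avg ^^ k) (\<lambda>p. g (snd p)) p = (step.avg ^^ k) g (snd p)"
  by (induction k arbitrary: p) (simp_all add: coupling.avg_def step.avg_def)

lemma coupling_iter_marginal_diff:
  "(coupling.avg ^^ k) (\<lambda>p. g (snd p) - g (fst p)) (\<eta>, \<zeta>) = (step.avg ^^ k) g \<zeta> - (step.avg ^^ k) g \<eta>"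
  using coupling.iter_diff[of k "\<lambda>p. g (snd p)" "\<lambda>p. g (fst p)"]
  by (simp add: coupling_iter_fst coupling_iter_snd)

lemma indicator_l1_le_discrepancies:
  assumes "\<eta> \<subseteq> \<zeta>" "\<zeta> \<in> Omega N"
  shows "(\<Sum>\<xi>\<in>Omega N. \<bar>(if \<zeta> = \<xi> then 1 else 0) - (if \<eta> = \<xi> then 1 else 0)\<bar>)
     \<le> 2 * (\<Sum>x\<in>{1..N-1}. occ \<zeta> x - occ \<eta> x)"
proof (cases "\<eta> = \<zeta>")
  case False
  have \<eta>: "\<eta> \<in> Omega N" using assms by (auto simp: Omega_def)
  have "(\<Sum>\<xi>\<in>Omega N. \<bar>(if \<zeta> = \<xi> then 1 else 0) - (if \<eta> = \<xi> then 1 else (0::real))\<bar>)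
      \<le> (\<Sum>\<xi>\<in>Omega N. (if \<zeta> = \<xi> then 1 else 0) + (if \<eta> = \<xi> then 1 else 0))"
    by (intro sum_mono) auto
  also have "\<dots> = 2" using \<eta> assms(2) by (simp add: sum.distrib Omega_def)
  finally have "(\<Sum>\<xi>\<in>Omega N. \<bar>(if \<zeta> = \<xi> then 1 else 0) - (if \<eta> = \<xi> then 1 else (0::real))\<bar>) \<le> 2" .
  moreover obtain y where y: "y \<in> \<zeta>" "y \<notin> \<eta>" using False assms(1) by blast
  then have "occ \<zeta> y - occ \<eta> y \<le> (\<Sum>x\<in>{1..N-1}. occ \<zeta> x - occ \<eta> x)"
    using assms by (intro member_le_sum) (auto simp: occ_def Omega_def)
  then have "1 \<le> (\<Sum>x\<in>{1..N-1}. occ \<zeta> x - occ \<eta> x)"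
    using y by (simp add: occ_def)
  ultimately show ?thesis by linarith
qed simp

lemma discrete_prob_l1_le_occ_gaps:
  assumes "\<eta> \<in> Omega N"
  shows "(\<Sum>\<xi>\<in>Omega N. \<bar>discrete_prob k {1..N-1} \<xi> - discrete_prob k \<eta> \<xi>\<bar>)
    \<le> 2 * (\<Sum>x\<in>{1..N-1}. occ_gap k x \<eta>)"
proof -
  let ?ind = "\<lambda>\<xi> \<theta>. if \<theta> = \<xi> then 1 else 0 :: real"
  have start: "(\<eta>, {1..N-1}) \<in> {(\<eta>, \<zeta>). \<eta> \<subseteq> \<zeta> \<and> \<zeta> \<in> Omega N}"
    using assms by (auto simp: Omega_def)
  have diff_as_coupling: "discrete_prob k {1..N-1} \<xi> - discrete_prob k \<eta> \<xi>
      = (coupling.avg ^^ k) (\<lambda>p. ?ind \<xi> (snd p) - ?ind \<xi> (fst p)) (\<eta>, {1..N-1})" for \<xi>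
    by (simp only: coupling_iter_marginal_diff[of k "?ind \<xi>"] discrete_prob_def)
  have "(\<Sum>\<xi>\<in>Omega N. \<bar>discrete_prob k {1..N-1} \<xi> - discrete_prob k \<eta> \<xi>\<bar>)
      \<le> (\<Sum>\<xi>\<in>Omega N. (coupling.avg ^^ k) (\<lambda>p. \<bar>?ind \<xi> (snd p) - ?ind \<xi> (fst p)\<bar>) (\<eta>, {1..N-1}))"
    unfolding diff_as_coupling by (intro sum_mono coupling.iter_abs_le[OF start])
  also have "\<dots> = (coupling.avg ^^ k)
      (\<lambda>p. \<Sum>\<xi>\<in>Omega N. \<bar>?ind \<xi> (snd p) - ?ind \<xi> (fst p)\<bar>) (\<eta>, {1..N-1})"
    by (rule coupling.iter_sum[symmetric])
  also have "\<dots> \<le> (coupling.avg ^^ k)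
      (\<lambda>p. 2 * (\<Sum>x\<in>{1..N-1}. occ (snd p) x - occ (fst p) x)) (\<eta>, {1..N-1})"
  proof (rule coupling.iter_mono[OF start])
    fix p assume "p \<in> {(\<eta>, \<zeta>). \<eta> \<subseteq> \<zeta> \<and> \<zeta> \<in> Omega N}"
    then have "fst p \<subseteq> snd p" "snd p \<in> Omega N" by auto
    from indicator_l1_le_discrepancies[OF this]
    show "(\<Sum>\<xi>\<in>Omega N. \<bar>?ind \<xi> (snd p) - ?ind \<xi> (fst p)\<bar>)
        \<le> 2 * (\<Sum>x\<in>{1..N-1}. occ (snd p) x - occ (fst p) x)" .
  qed
  also have "\<dots> = 2 * (\<Sum>x\<in>{1..N-1}. occ_gap k x \<eta>)"
    by (simp add: coupling.iter_scale coupling.iter_sum occ_gap_def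
        coupling_iter_marginal_diff[of k "\<lambda>\<theta>. occ \<theta> _", simplified])
  finally show ?thesis .
qed

lemma discrete_prob_l1_le:
  assumes "\<eta> \<in> Omega N" "\<eta>' \<in> Omega N"
  shows "(\<Sum>\<xi>\<in>Omega N. \<bar>discrete_prob k \<eta> \<xi> - discrete_prob k \<eta>' \<xi>\<bar>) \<le> real N ^ 3 * decay ^ k"
proof -
  have to_full: "(\<Sum>\<xi>\<in>Omega N. \<bar>discrete_prob k {1..N-1} \<xi> - discrete_prob k \<theta> \<xi>\<bar>)
      \<le> real N ^ 3 * decay ^ k / 2" if "\<theta> \<in> Omega N" for \<theta>
  proof -
    have "occ_gap k x \<theta> \<le> decay ^ k * (real N ^ 2 / 4)" if "x \<in> {1..N-1}" for x
    proof -
      have "occ_gap k x \<theta> \<le> decay ^ k * (real x * (real N - real x))"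
        using occ_gap_le_parabola[OF \<open>\<theta> \<in> Omega N\<close>] that by auto
      also have "\<dots> \<le> decay ^ k * (real N ^ 2 / 4)"
        using parabola_le_square[of x N] decay_nonneg by (intro mult_left_mono) auto
      finally show ?thesis .
    qed
    then have "(\<Sum>x\<in>{1..N-1}. occ_gap k x \<theta>) \<le> card {1..N-1} * (decay ^ k * (real N ^ 2 / 4))"
      by (rule sum_bounded_above)
    also have "\<dots> = (N - 1) * (decay ^ k * (real N ^ 2 / 4))"
      by simp
    also have "\<dots> \<le> N * (decay ^ k * (real N ^ 2 / 4))"
      using decay_nonneg by (intro mult_right_mono) auto
    finally show ?thesis
      using discrete_prob_l1_le_occ_gaps[OF that, of k]
      by (simp add: power2_eq_square power3_eq_cube algebra_simps)
  qed
  have "(\<Sum>\<xi>\<in>Omega N. \<bar>discrete_prob k \<eta> \<xi> - discrete_prob k \<eta>' \<xi>\<bar>)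
     \<le> (\<Sum>\<xi>\<in>Omega N. \<bar>discrete_prob k {1..N-1} \<xi> - discrete_prob k \<eta> \<xi>\<bar>
                     + \<bar>discrete_prob k {1..N-1} \<xi> - discrete_prob k \<eta>' \<xi>\<bar>)"
    by (intro sum_mono) linarith
  then show ?thesis
    using to_full[OF assms(1)] to_full[OF assms(2)] by (simp add: sum.distrib)
qed

lemma Pt_l1_le:
  assumes "\<eta> \<in> Omega N" "\<eta>' \<in> Omega N" "0 \<le> t"
  shows "(\<Sum>\<xi>\<in>Omega N. \<bar>Pt N a b t \<eta> \<xi> - Pt N a b t \<eta>' \<xi>\<bar>) \<le> real N ^ 3 * exp (-(4 * t / N^2))"
proof -
  let ?D = "\<lambda>\<xi> i. discrete_prob i \<eta> \<xi> - discrete_prob i \<eta>' \<xi>"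
  have "Pt N a b t \<eta> \<xi> - Pt N a b t \<eta>' \<xi> = exp (-(N/2*t)) * (\<Sum>i. (N/2*t)^i / fact i * ?D \<xi> i)" for \<xi>
  proof -
    have summable: "summable (\<lambda>i. (N/2*t)^i / fact i * discrete_prob i \<theta> \<xi>)" if "\<theta> \<in> Omega N" for \<theta>
      by (rule summable_rabs_cancel[OF poisson_weighted_abs_summable])
        (rule discrete_prob_abs_le_1[OF that])
    have "(\<Sum>i. (N/2*t)^i / fact i * ?D \<xi> i)
        = (\<Sum>i. (N/2*t)^i / fact i * discrete_prob i \<eta> \<xi>) - (\<Sum>i. (N/2*t)^i / fact i * discrete_prob i \<eta>' \<xi>)"
      unfolding right_diff_distrib by (rule suminf_diff[OF summable[OF assms(1)] summable[OF assms(2)], symmetric])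
    then show ?thesis
      unfolding Pt_eq_poisson_mixture[OF assms(1)] Pt_eq_poisson_mixture[OF assms(2)]
      by (simp only: right_diff_distrib)
  qed
  moreover have "\<bar>?D \<xi> i\<bar> \<le> 1" for \<xi> i
    using discrete_prob_bounds[OF assms(1), of i \<xi>] discrete_prob_bounds[OF assms(2), of i \<xi>]
    by (simp add: abs_le_iff)
  ultimately have "(\<Sum>\<xi>\<in>Omega N. \<bar>Pt N a b t \<eta> \<xi> - Pt N a b t \<eta>' \<xi>\<bar>)
      \<le> real N ^ 3 * exp (-(N/2*t * (1 - decay)))"
    using poisson_mixture_l1_le[where X = "Omega N" and x = "N/2*t" and D = ?D and B = 1
        and C = "real N ^ 3" and l = decay] discrete_prob_l1_le[OF assms(1,2)] assms(3)
    by (simp add: Omega_def)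
  also have "N/2*t * (1 - decay) = 4 * t / N^2"
    using N_ge_2 by (simp add: decay_def power2_eq_square power3_eq_cube)
  finally show ?thesis .
qed

section \<open>Stationarity and the mixing time\<close>

lemma stationary_Qpow_Suc:
  assumes "stationary N a b \<nu>"
  shows "(\<Sum>\<eta>\<in>Omega N. \<nu> \<eta> * Qpow N a b (Suc k) \<eta> \<xi>) = 0"
proof -
  have "(\<Sum>\<eta>\<in>Omega N. \<nu> \<eta> * Qpow N a b (Suc k) \<eta> \<xi>)
      = (\<Sum>\<zeta>\<in>Omega N. (\<Sum>\<eta>\<in>Omega N. \<nu> \<eta> * Qmat N a b \<eta> \<zeta>) * Qpow N a b k \<zeta> \<xi>)"
    unfolding Qpow.simps sum_distrib_left
    by (subst sum.swap) (simp add: sum_distrib_right mult.assoc)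
  also have "\<dots> = 0"
    using assms unfolding stationary_def by simp
  finally show ?thesis .
qed

lemma stationary_Pt:
  assumes "stationary N a b \<nu>" "\<xi> \<in> Omega N"
  shows "(\<Sum>\<eta>\<in>Omega N. \<nu> \<eta> * Pt N a b t \<eta> \<xi>) = \<nu> \<xi>"
proof -
  define f where "f \<eta> k = \<nu> \<eta> * (t^k / fact k * Qpow N a b k \<eta> \<xi>)" for \<eta> k
  have f_sums: "f \<eta> sums (\<nu> \<eta> * Pt N a b t \<eta> \<xi>)" if "\<eta> \<in> Omega N" for \<eta>
    unfolding f_def Pt_def using Pt_sums[OF that, of t \<xi>]
    by (intro sums_mult) (simp add: sums_iff)
  have "(\<Sum>\<eta>\<in>Omega N. \<nu> \<eta> * Pt N a b t \<eta> \<xi>) = (\<Sum>\<eta>\<in>Omega N. \<Sum>k. f \<eta> k)"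
    using f_sums by (intro sum.cong refl) (simp add: sums_iff)
  also have "\<dots> = (\<Sum>k. \<Sum>\<eta>\<in>Omega N. f \<eta> k)"
    using f_sums by (intro suminf_sum[symmetric]) (simp add: sums_iff)
  also have "(\<lambda>k. \<Sum>\<eta>\<in>Omega N. f \<eta> k) = (\<lambda>k. if k = 0 then \<nu> \<xi> else 0)"
  proof
    fix k
    show "(\<Sum>\<eta>\<in>Omega N. f \<eta> k) = (if k = 0 then \<nu> \<xi> else 0)"
    proof (cases k)
      case 0
      then show ?thesis
        using assms(2) by (simp add: f_def Omega_def if_distrib[of "\<lambda>x. _ * x"] cong: if_cong)
    next
      case (Suc j)
      have "(\<Sum>\<eta>\<in>Omega N. f \<eta> k) = t^k / fact k * (\<Sum>\<eta>\<in>Omega N. \<nu> \<eta> * Qpow N a b (Suc j) \<eta> \<xi>)"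
        unfolding f_def Suc by (simp add: sum_distrib_left algebra_simps)
      then show ?thesis
        using stationary_Qpow_Suc[OF assms(1)] Suc by simp
    qed
  qed
  also have "(\<Sum>k. if k = 0 then \<nu> \<xi> else 0) = \<nu> \<xi>"
    using sums_single[of 0 "\<lambda>_. \<nu> \<xi>"] by (simp add: sums_iff)
  finally show ?thesis .
qed

text \<open>Stationarity writes \<open>P_t(\<eta>,\<cdot>) - \<nu>\<close> as the \<open>\<nu>\<close>-average of \<open>P_t(\<eta>,\<cdot>) - P_t(\<eta>',\<cdot>)\<close>.\<close>

lemma tv_dist_le:
  assumes "stationary N a b \<nu>" "\<eta> \<in> Omega N" "0 \<le> t"
  shows "tv_dist N a b \<nu> t \<eta> \<le> real N ^ 3 * exp (-(4 * t / N^2)) / 2"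
proof -
  let ?B = "real N ^ 3 * exp (-(4 * t / N^2))"
  have \<nu>_nonneg: "\<And>\<eta>. \<eta> \<in> Omega N \<Longrightarrow> 0 \<le> \<nu> \<eta>" and \<nu>_sum: "(\<Sum>\<eta>\<in>Omega N. \<nu> \<eta>) = 1"
    using assms(1) unfolding stationary_def by auto
  have "Pt N a b t \<eta> \<xi> - \<nu> \<xi> = (\<Sum>\<eta>'\<in>Omega N. \<nu> \<eta>' * (Pt N a b t \<eta> \<xi> - Pt N a b t \<eta>' \<xi>))"
    if "\<xi> \<in> Omega N" for \<xi>
    using stationary_Pt[OF assms(1) that, of t] \<nu>_sum
    by (simp add: right_diff_distrib sum_subtractf flip: sum_distrib_right)
  then have "(\<Sum>\<xi>\<in>Omega N. \<bar>Pt N a b t \<eta> \<xi> - \<nu> \<xi>\<bar>)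
      \<le> (\<Sum>\<xi>\<in>Omega N. \<Sum>\<eta>'\<in>Omega N. \<nu> \<eta>' * \<bar>Pt N a b t \<eta> \<xi> - Pt N a b t \<eta>' \<xi>\<bar>)"
    using \<nu>_nonneg by (intro sum_mono) (simp add: order_trans[OF sum_abs] abs_mult)
  also have "\<dots> = (\<Sum>\<eta>'\<in>Omega N. \<nu> \<eta>' * (\<Sum>\<xi>\<in>Omega N. \<bar>Pt N a b t \<eta> \<xi> - Pt N a b t \<eta>' \<xi>\<bar>))"
    by (subst sum.swap) (simp add: sum_distrib_left)
  also have "\<dots> \<le> (\<Sum>\<eta>'\<in>Omega N. \<nu> \<eta>' * ?B)"
    using Pt_l1_le[OF assms(2) _ assms(3)] \<nu>_nonneg by (intro sum_mono mult_left_mono) auto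
  also have "\<dots> = ?B"
    using \<nu>_sum by (simp flip: sum_distrib_right)
  finally show ?thesis
    unfolding tv_dist_def by simp
qed

end

lemma Tmix_le:
  assumes "0 < t" "\<And>\<eta>. \<eta> \<in> Omega N \<Longrightarrow> tv_dist N a b \<nu> t \<eta> \<le> 1/4"
  shows "Tmix N a b \<nu> \<le> t"
  unfolding Tmix_def using assms by (intro cInf_lower bdd_belowI[of _ 0]) auto

theorem mainTheorem11:
  fixes N :: nat and \<alpha> \<beta> :: real and \<nu> :: "nat set \<Rightarrow> real"
  assumes "0 < \<alpha>" and "\<alpha> \<le> \<beta>" and "\<beta> < 1" and "N \<ge> 2"
    and "stationary N \<alpha> \<beta> \<nu>"
  shows "Tmix N \<alpha> \<beta> \<nu> \<le> 1/2 * real N ^ 3"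
proof -
  interpret bdssep N \<alpha> \<beta>
    using assms by unfold_locales auto
  define t where "t = 1/2 * real N ^ 3"
  have "tv_dist N \<alpha> \<beta> \<nu> t \<eta> \<le> 1/4" if "\<eta> \<in> Omega N" for \<eta>
  proof -
    have "tv_dist N \<alpha> \<beta> \<nu> t \<eta> \<le> real N ^ 3 * exp (-(4 * t / N^2)) / 2"
      by (rule tv_dist_le[OF assms(5) that]) (simp add: t_def)
    also have "4 * t / N^2 = 2 * real N"
      using assms(4) by (simp add: t_def power2_eq_square power3_eq_cube)
    finally show ?thesis
      using cube_mul_exp_le[of "real N"] by simp
  qed
  then show ?thesis
    using assms(4) unfolding t_def by (intro Tmix_le) auto
qed

end
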